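(* Let $q$ be a prime power. The nilpotent graph $\Gamma_{\mathfrak{N}}(\mathfrak{t}(2,\mathbb{F}_q))$ has exactly $q+1$ connected components, and each of them is a complete graph $K_{q(q-1)}$.
   Context: $\mathfrak{t}(2,\mathbb{F}_q)$ is the Lie algebra of $2\times 2$ upper triangular matrices over $\mathbb{F}_q$ with bracket $[x,y]=xy-yx$. $\langle a,b\rangle$ denotes the Lie subalgebra generated by $a,b$, and $\mathrm{nil}(L)=\{x\in L\mid \langle h,x\rangle \text{ is nilpotent for all } h\in L\}$. For a finite-dimensional non-nilpotent Lie algebra $L$, the nilpotent graph $\Gamma_{\mathfrak{N}}(L)$ is the simple undirected graph with vertex set $L\setminus\mathrm{nil}(L)$ in which distinct vertices $x,y$ are adjacent iff $\langle x,y\rangle$ is nilpotent. *)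

theory Defs
  imports "HOL-Analysis.Analysis"
begin

definition lie_bracket :: "'a::field^'n^'n \<Rightarrow> 'a^'n^'n \<Rightarrow> 'a^'n^'n" where
  "lie_bracket x y = x ** y - y ** x"

definition mat_smult :: "'a::field \<Rightarrow> 'a^'n^'n \<Rightarrow> 'a^'n^'n" where
  "mat_smult c M = (\<chi> i j. c * M $ i $ j)"

definition is_subspace :: "('a::field^'n^'n) set \<Rightarrow> bool" where
  "is_subspace W \<longleftrightarrow> 0 \<in> W \<and> (\<forall>x\<in>W. \<forall>y\<in>W. x + y \<in> W)
     \<and> (\<forall>c. \<forall>x\<in>W. mat_smult c x \<in> W)"

definition lin_span :: "('a::field^'n^'n) set \<Rightarrow> ('a^'n^'n) set" where
  "lin_span A = \<Inter>{W. is_subspace W \<and> A \<subseteq> W}"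

definition is_lie_subalg :: "('a::field^'n^'n) set \<Rightarrow> bool" where
  "is_lie_subalg S \<longleftrightarrow> is_subspace S \<and> (\<forall>x\<in>S. \<forall>y\<in>S. lie_bracket x y \<in> S)"

definition lie_gen :: "('a::field^'n^'n) set \<Rightarrow> 'a^'n^'n \<Rightarrow> 'a^'n^'n \<Rightarrow> ('a^'n^'n) set" where
  "lie_gen L a b = \<Inter>{S. is_lie_subalg S \<and> S \<subseteq> L \<and> a \<in> S \<and> b \<in> S}"

fun lower_central :: "('a::field^'n^'n) set \<Rightarrow> nat \<Rightarrow> ('a^'n^'n) set" where
  "lower_central S 0 = S"
| "lower_central S (Suc k) = lin_span {lie_bracket x y | x y. x \<in> S \<and> y \<in> lower_central S k}"

definition lie_nilpotent :: "('a::field^'n^'n) set \<Rightarrow> bool" where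
  "lie_nilpotent S \<longleftrightarrow> (\<exists>k. lower_central S k = {0})"

definition nil_set :: "('a::field^'n^'n) set \<Rightarrow> ('a^'n^'n) set" where
  "nil_set L = {x \<in> L. \<forall>h\<in>L. lie_nilpotent (lie_gen L h x)}"

definition ng_vertices :: "('a::field^'n^'n) set \<Rightarrow> ('a^'n^'n) set" where
  "ng_vertices L = L - nil_set L"

definition ng_adj :: "('a::field^'n^'n) set \<Rightarrow> 'a^'n^'n \<Rightarrow> 'a^'n^'n \<Rightarrow> bool" where
  "ng_adj L x y \<longleftrightarrow> x \<in> ng_vertices L \<and> y \<in> ng_vertices L \<and> x \<noteq> y
     \<and> lie_nilpotent (lie_gen L x y)"

definition conn_components :: "'v set \<Rightarrow> ('v \<Rightarrow> 'v \<Rightarrow> bool) \<Rightarrow> 'v set set" where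
  "conn_components V E = (\<lambda>x. {y \<in> V. (\<lambda>u v. u \<in> V \<and> v \<in> V \<and> E u v)\<^sup>*\<^sup>* x y}) ` V"

definition is_clique :: "'v set \<Rightarrow> ('v \<Rightarrow> 'v \<Rightarrow> bool) \<Rightarrow> bool" where
  "is_clique C E \<longleftrightarrow> (\<forall>x\<in>C. \<forall>y\<in>C. x \<noteq> y \<longrightarrow> E x y)"

definition upper_tri2 :: "('a::field^2^2) set" where
  "upper_tri2 = {M. M $ 2 $ 1 = 0}"

end

theory Submission
  imports Defs
begin

text \<open>For x = [[a, b], [0, d]] in t(2) one has [x, y] = \<delta>(x, y) E12, where
  \<delta>(x, y) = (a - d) b' - (a' - d') b is the determinant of the vectors (a - d, b) and (a' - d', b').
  Two elements generate a nilpotent subalgebra iff they commute: commuting elements span an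
  abelian subalgebra, while if e = [x, y] \<noteq> 0, then x or y acts on e by a nonzero scalar, so e
  lies in every term of the lower central series. Hence nil(L) consists of the scalar matrices,
  and on the remaining q^3 - q elements commuting means that the vectors (a - d, b) are parallel,
  which is an equivalence relation. The components are therefore its classes, which are cliques;
  each class is the preimage of a punctured line of F_q^2 and has q(q - 1) elements, so there
  are q + 1 of them.\<close>

lemma lin_span_subspace: "is_subspace (lin_span A)"
  unfolding lin_span_def is_subspace_def by blast

lemma lin_span_superset: "A \<subseteq> lin_span A"
  unfolding lin_span_def by blast

lemma lin_span_least: "is_subspace W \<Longrightarrow> A \<subseteq> W \<Longrightarrow> lin_span A \<subseteq> W"
  unfolding lin_span_def by blast

lemma lin_span_smult: "x \<in> lin_span A \<Longrightarrow> mat_smult c x \<in> lin_span A"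
  using lin_span_subspace unfolding is_subspace_def by blast

lemma lie_gen_generators: "x \<in> lie_gen L x y" "y \<in> lie_gen L x y"
  unfolding lie_gen_def by blast+

lemma lie_gen_bracket:
  "a \<in> lie_gen L x y \<Longrightarrow> b \<in> lie_gen L x y \<Longrightarrow> lie_bracket a b \<in> lie_gen L x y"
  unfolding lie_gen_def is_lie_subalg_def by blast

lemma lie_gen_least:
  "is_lie_subalg S \<Longrightarrow> S \<subseteq> L \<Longrightarrow> x \<in> S \<Longrightarrow> y \<in> S \<Longrightarrow> lie_gen L x y \<subseteq> S"
  unfolding lie_gen_def by blast

lemma lie_bracket_self [simp]: "lie_bracket x x = 0"
  by (simp add: lie_bracket_def)

lemma lie_bracket_swap: "lie_bracket y x = - lie_bracket x y"
  by (simp add: lie_bracket_def)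

lemma lie_bracket_span2:
  "lie_bracket (mat_smult a x + mat_smult b y) (mat_smult c x + mat_smult d y)
    = mat_smult (a * d - b * c) (lie_bracket x y)"
  by (simp add: vec_eq_iff lie_bracket_def mat_smult_def matrix_matrix_mult_def
      sum_subtractf[symmetric] sum_distrib_left sum.distrib[symmetric] algebra_simps)

lemma is_subspace_zero: "is_subspace {0 :: 'a::field^'n^'n}"
  by (simp add: is_subspace_def mat_smult_def vec_eq_iff)

lemma lie_nilpotent_if_abelian:
  assumes "\<And>x y. x \<in> S \<Longrightarrow> y \<in> S \<Longrightarrow> lie_bracket x y = 0"
  shows "lie_nilpotent S"
proof -
  have "{lie_bracket x y | x y. x \<in> S \<and> y \<in> lower_central S 0} \<subseteq> {0}"
    using assms by auto
  then have "lower_central S 1 \<subseteq> {0}"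
    using lin_span_least[OF is_subspace_zero] by simp
  moreover have "0 \<in> lower_central S 1"
    using lin_span_subspace is_subspace_def by auto
  ultimately have "lower_central S 1 = {0}" by blast
  then show ?thesis unfolding lie_nilpotent_def by blast
qed

lemma lie_nilpotent_lie_gen_if_commute:
  assumes L: "is_lie_subalg L" and "x \<in> L" "y \<in> L" and xy: "lie_bracket x y = 0"
  shows "lie_nilpotent (lie_gen L x y)"
proof -
  define S where "S = {mat_smult a x + mat_smult b y | a b. True}"
  have abelian: "lie_bracket u v = 0" if uv: "u \<in> S" "v \<in> S" for u v
  proof -
    obtain a b c d where "u = mat_smult a x + mat_smult b y" "v = mat_smult c x + mat_smult d y"
      using uv unfolding S_def by blast
    then have "lie_bracket u v = mat_smult (a * d - b * c) (lie_bracket x y)"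
      by (simp add: lie_bracket_span2)
    then show ?thesis
      unfolding xy by (simp add: mat_smult_def vec_eq_iff)
  qed
  have "is_subspace S"
    unfolding is_subspace_def
  proof (intro conjI ballI allI)
    have "0 = mat_smult 0 x + mat_smult 0 y"
      by (simp add: mat_smult_def vec_eq_iff)
    then show "0 \<in> S" unfolding S_def by blast
  next
    fix u v assume "u \<in> S" "v \<in> S"
    then obtain a b c d where "u = mat_smult a x + mat_smult b y" "v = mat_smult c x + mat_smult d y"
      unfolding S_def by blast
    then have "u + v = mat_smult (a + c) x + mat_smult (b + d) y"
      by (simp add: mat_smult_def vec_eq_iff algebra_simps)
    then show "u + v \<in> S" unfolding S_def by blast
  next
    fix c u assume "u \<in> S"
    then obtain a b where "u = mat_smult a x + mat_smult b y"
      unfolding S_def by blast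
    then have "mat_smult c u = mat_smult (c * a) x + mat_smult (c * b) y"
      by (simp add: mat_smult_def vec_eq_iff algebra_simps)
    then show "mat_smult c u \<in> S" unfolding S_def by blast
  qed
  then have "is_lie_subalg S"
    using abelian unfolding is_lie_subalg_def is_subspace_def by simp
  have "mat_smult a x + mat_smult b y \<in> L" for a b
    using L \<open>x \<in> L\<close> \<open>y \<in> L\<close> unfolding is_lie_subalg_def is_subspace_def by blast
  then have "S \<subseteq> L"
    unfolding S_def by blast
  have "x = mat_smult 1 x + mat_smult 0 y" "y = mat_smult 0 x + mat_smult 1 y"
    by (simp_all add: mat_smult_def vec_eq_iff)
  then have "x \<in> S" "y \<in> S"
    unfolding S_def by blast+
  with \<open>is_lie_subalg S\<close> \<open>S \<subseteq> L\<close> have "lie_gen L x y \<subseteq> S"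
    by (intro lie_gen_least)
  then show ?thesis
    using abelian by (intro lie_nilpotent_if_abelian) blast
qed

lemma not_lie_nilpotent_if_ad_eigenvector:
  assumes "z \<in> S" "e \<in> S" "e \<noteq> 0" "c \<noteq> 0" and eigen: "lie_bracket z e = mat_smult c e"
  shows "\<not> lie_nilpotent S"
proof -
  have e_eq: "e = mat_smult (1 / c) (lie_bracket z e)"
    using \<open>c \<noteq> 0\<close> unfolding eigen by (simp add: mat_smult_def vec_eq_iff)
  have "e \<in> lower_central S k" for k
  proof (induction k)
    case 0
    then show ?case using \<open>e \<in> S\<close> by simp
  next
    case (Suc k)
    then have "lie_bracket z e \<in> {lie_bracket a b | a b. a \<in> S \<and> b \<in> lower_central S k}"
      using \<open>z \<in> S\<close> by blast
    then have "lie_bracket z e \<in> lower_central S (Suc k)"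
      unfolding lower_central.simps by (rule subsetD[OF lin_span_superset])
    then show ?case
      by (subst e_eq) (simp only: lower_central.simps lin_span_smult)
  qed
  then show ?thesis
    using \<open>e \<noteq> 0\<close> unfolding lie_nilpotent_def by blast
qed

lemma conn_components_eq_quotient:
  assumes r: "equiv V r" and adj: "\<And>x y. x \<in> V \<Longrightarrow> y \<in> V \<Longrightarrow> E x y \<longleftrightarrow> x \<noteq> y \<and> (x, y) \<in> r"
  shows "conn_components V E = V // r"
proof -
  let ?E = "\<lambda>u v. u \<in> V \<and> v \<in> V \<and> E u v"
  have component: "{y \<in> V. ?E\<^sup>*\<^sup>* x y} = r``{x}" if "x \<in> V" for x
  proof (intro equalityI subsetI)
    fix y assume "y \<in> {y \<in> V. ?E\<^sup>*\<^sup>* x y}"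
    then have "?E\<^sup>*\<^sup>* x y" by simp
    then show "y \<in> r``{x}"
    proof (induction rule: rtranclp_induct)
      case base
      show ?case using equiv_class_self[OF r \<open>x \<in> V\<close>] .
    next
      case (step y z)
      then have "(y, z) \<in> r" using adj by blast
      with step.IH show ?case using r unfolding equiv_def trans_def by blast
    qed
  next
    fix y assume "y \<in> r``{x}"
    then have "y \<in> V" "(x, y) \<in> r" using equiv_type[OF r] by blast+
    then have "x = y \<or> ?E x y" using adj \<open>x \<in> V\<close> by blast
    then show "y \<in> {y \<in> V. ?E\<^sup>*\<^sup>* x y}" using \<open>y \<in> V\<close> by auto
  qed
  have "conn_components V E = (\<lambda>x. r``{x}) ` V"
    unfolding conn_components_def using component by (rule image_cong[OF refl])
  also have "\<dots> = V // r"
    by (simp add: quotient_def UNION_singleton_eq_range)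
  finally show ?thesis .
qed

lemma is_clique_quotient:
  assumes r: "equiv V r" and adj: "\<And>x y. x \<in> V \<Longrightarrow> y \<in> V \<Longrightarrow> E x y \<longleftrightarrow> x \<noteq> y \<and> (x, y) \<in> r"
    and "C \<in> V // r"
  shows "is_clique C E"
  using \<open>C \<in> V // r\<close>
proof (rule quotientE)
  fix x assume "C = r``{x}" "x \<in> V"
  then show "is_clique C E"
    unfolding is_clique_def using adj equiv_class_eq_iff[OF r] by auto
qed

lemma card_quotient_uniform:
  assumes "finite A" "equiv A r" "\<And>C. C \<in> A // r \<Longrightarrow> card C = k"
  shows "k * card (A // r) = card A"
proof -
  have "k * card (A // r) = card (\<Union>(A // r))"
    by (rule card_partition)
      (use assms in \<open>auto simp: Union_quotient finite_quotient equiv_type dest: quotient_disj\<close>)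
  then show ?thesis
    using Union_quotient[OF assms(2)] by simp
qed

lemma ng_vertices_subset: "ng_vertices L \<subseteq> L"
  by (auto simp: ng_vertices_def)

definition commute_rel :: "('a::field^'n^'n) set \<Rightarrow> ('a^'n^'n) rel" where
  "commute_rel V = {(x, y) \<in> V \<times> V. lie_bracket x y = 0}"

definition tri2 :: "'a::zero \<Rightarrow> 'a \<Rightarrow> 'a \<Rightarrow> 'a^2^2" where
  "tri2 a b d = vector [vector [a, b], vector [0, d]]"

lemma tri2_nth [simp]:
  "tri2 a b d $ 1 $ 1 = a" "tri2 a b d $ 1 $ 2 = b" "tri2 a b d $ 2 $ 1 = 0" "tri2 a b d $ 2 $ 2 = d"
  by (simp_all add: tri2_def)

lemma mat2_eq_iff:
  "(M::'a^2^2) = N \<longleftrightarrow> M$1$1 = N$1$1 \<and> M$1$2 = N$1$2 \<and> M$2$1 = N$2$1 \<and> M$2$2 = N$2$2"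
  by (auto simp: vec_eq_iff forall_2)

lemma tri2_eq_iff [simp]: "tri2 a b d = tri2 a' b' d' \<longleftrightarrow> a = a' \<and> b = b' \<and> d = d'"
  by (simp add: mat2_eq_iff)

lemma tri2_in_upper_tri2 [simp]: "tri2 a b d \<in> upper_tri2"
  by (simp add: upper_tri2_def)

lemma upper_tri2_eq_range: "upper_tri2 = range (\<lambda>(a, b, d). tri2 a b d)"
proof (intro equalityI subsetI)
  fix x :: "'a^2^2" assume "x \<in> upper_tri2"
  then have "x = tri2 (x$1$1) (x$1$2) (x$2$2)"
    by (simp add: mat2_eq_iff upper_tri2_def)
  then show "x \<in> range (\<lambda>(a, b, d). tri2 a b d)"
    unfolding image_iff by (intro bexI[of _ "(x$1$1, x$1$2, x$2$2)"]) auto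
qed auto

definition bracket_coeff :: "'a::field^2^2 \<Rightarrow> 'a^2^2 \<Rightarrow> 'a" where
  "bracket_coeff x y = (x$1$1 - x$2$2) * y$1$2 - (y$1$1 - y$2$2) * x$1$2"

lemma lie_bracket_upper_tri2:
  assumes "x \<in> upper_tri2" "y \<in> upper_tri2"
  shows "lie_bracket x y = tri2 0 (bracket_coeff x y) 0"
  using assms
  by (simp add: mat2_eq_iff lie_bracket_def matrix_matrix_mult_def sum_2 upper_tri2_def
      bracket_coeff_def algebra_simps)

lemma lie_bracket_eq_0_upper_tri2:
  "x \<in> upper_tri2 \<Longrightarrow> y \<in> upper_tri2 \<Longrightarrow> lie_bracket x y = 0 \<longleftrightarrow> bracket_coeff x y = 0"
  by (simp add: lie_bracket_upper_tri2 mat2_eq_iff)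

lemma bracket_coeff_trans:
  assumes "bracket_coeff x w = 0" "bracket_coeff w z = 0" "w$1$1 \<noteq> w$2$2 \<or> w$1$2 \<noteq> 0"
  shows "bracket_coeff x z = 0"
proof -
  have "(w$1$1 - w$2$2) * bracket_coeff x z = 0" "w$1$2 * bracket_coeff x z = 0"
    using assms(1,2) unfolding bracket_coeff_def by algebra+
  then show ?thesis using assms(3) by auto
qed

lemma is_lie_subalg_upper_tri2: "is_lie_subalg upper_tri2"
proof -
  have "lie_bracket x y \<in> upper_tri2" if "x \<in> upper_tri2" "y \<in> upper_tri2" for x y :: "'a^2^2"
    using that by (simp add: lie_bracket_upper_tri2)
  then show ?thesis
    by (auto simp: is_lie_subalg_def is_subspace_def upper_tri2_def mat_smult_def)
qed

lemma lie_nilpotent_lie_gen_upper_tri2_iff: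
  assumes "x \<in> upper_tri2" "y \<in> upper_tri2"
  shows "lie_nilpotent (lie_gen upper_tri2 x y) \<longleftrightarrow> lie_bracket x y = 0"
proof
  assume nilpotent: "lie_nilpotent (lie_gen upper_tri2 x y)"
  show "lie_bracket x y = 0"
  proof (rule ccontr)
    define e where "e = lie_bracket x y"
    assume "lie_bracket x y \<noteq> 0"
    then have "e \<noteq> 0" "bracket_coeff x y \<noteq> 0"
      using assms by (simp_all add: e_def lie_bracket_eq_0_upper_tri2)
    then have "x$1$1 \<noteq> x$2$2 \<or> y$1$1 \<noteq> y$2$2"
      unfolding bracket_coeff_def by auto
    then obtain z where z: "z \<in> {x, y}" "z$1$1 \<noteq> z$2$2"
      by blast
    then have "z \<in> upper_tri2" using assms by blast
    then have "lie_bracket z e = mat_smult (z$1$1 - z$2$2) e"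
      using assms by (simp add: e_def lie_bracket_upper_tri2 bracket_coeff_def mat2_eq_iff mat_smult_def)
    moreover have "z \<in> lie_gen upper_tri2 x y" "e \<in> lie_gen upper_tri2 x y"
      using z lie_gen_generators lie_gen_bracket unfolding e_def by blast+
    ultimately show False
      using not_lie_nilpotent_if_ad_eigenvector \<open>e \<noteq> 0\<close> z(2) nilpotent by fastforce
  qed
next
  assume "lie_bracket x y = 0"
  then show "lie_nilpotent (lie_gen upper_tri2 x y)"
    using is_lie_subalg_upper_tri2 assms by (rule lie_nilpotent_lie_gen_if_commute[rotated 3])
qed

lemma nil_set_upper_tri2: "nil_set upper_tri2 = range (\<lambda>d. tri2 d 0 d)"
proof (intro equalityI subsetI)
  fix x :: "'a^2^2" assume x: "x \<in> nil_set upper_tri2"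
  then have "x \<in> upper_tri2" by (simp add: nil_set_def)
  moreover have "bracket_coeff (tri2 1 0 0) x = 0" "bracket_coeff (tri2 0 1 0) x = 0"
    using x lie_nilpotent_lie_gen_upper_tri2_iff[OF tri2_in_upper_tri2 \<open>x \<in> upper_tri2\<close>]
      lie_bracket_eq_0_upper_tri2[OF tri2_in_upper_tri2 \<open>x \<in> upper_tri2\<close>]
    unfolding nil_set_def by auto
  ultimately have "x = tri2 (x$2$2) 0 (x$2$2)"
    by (simp add: bracket_coeff_def mat2_eq_iff upper_tri2_def)
  then show "x \<in> range (\<lambda>d. tri2 d 0 d)" by blast
next
  fix x :: "'a^2^2" assume "x \<in> range (\<lambda>d. tri2 d 0 d)"
  then show "x \<in> nil_set upper_tri2"
    by (auto simp: nil_set_def lie_nilpotent_lie_gen_upper_tri2_iff lie_bracket_eq_0_upper_tri2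
        bracket_coeff_def)
qed

lemma ng_vertices_upper_tri2:
  "ng_vertices upper_tri2 = {x \<in> upper_tri2. x$1$1 \<noteq> x$2$2 \<or> x$1$2 \<noteq> 0}"
  unfolding ng_vertices_def nil_set_upper_tri2 by (auto simp: upper_tri2_def mat2_eq_iff)

lemma card_upper_tri2: "card (upper_tri2 :: ('a::{field,finite}^2^2) set) = CARD('a) ^ 3"
proof -
  have "inj (\<lambda>(a, b, d). tri2 a b d :: 'a^2^2)"
    by (rule injI) (clarsimp split: prod.splits)
  then show ?thesis
    unfolding upper_tri2_eq_range by (simp add: card_image power3_eq_cube)
qed

lemma card_ng_vertices_upper_tri2:
  "card (ng_vertices (upper_tri2 :: ('a::{field,finite}^2^2) set)) = CARD('a) ^ 3 - CARD('a)"
proof -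
  have "inj (\<lambda>d. tri2 d 0 d :: 'a^2^2)"
    by (rule injI) simp
  then have "card (range (\<lambda>d. tri2 d 0 d :: 'a^2^2)) = CARD('a)"
    by (rule card_image)
  moreover have "range (\<lambda>d. tri2 d 0 d :: 'a^2^2) \<subseteq> upper_tri2"
    by auto
  ultimately show ?thesis
    unfolding ng_vertices_def nil_set_upper_tri2 by (simp add: card_Diff_subset card_upper_tri2)
qed

lemma equiv_commute_rel_upper_tri2:
  "equiv (ng_vertices upper_tri2) (commute_rel (ng_vertices upper_tri2))"
proof (rule equivI)
  show "refl_on (ng_vertices upper_tri2) (commute_rel (ng_vertices upper_tri2))"
    by (auto simp: refl_on_def commute_rel_def)
  show "sym (commute_rel (ng_vertices upper_tri2))"
  proof (rule symI)
    fix x y assume "(x, y) \<in> commute_rel (ng_vertices upper_tri2)"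
    then show "(y, x) \<in> commute_rel (ng_vertices upper_tri2)"
      using lie_bracket_swap[of y x] by (simp add: commute_rel_def)
  qed
  show "trans (commute_rel (ng_vertices upper_tri2))"
  proof (rule transI)
    fix x y z
    assume "(x, y) \<in> commute_rel (ng_vertices upper_tri2)" "(y, z) \<in> commute_rel (ng_vertices upper_tri2)"
    then have V: "x \<in> ng_vertices upper_tri2" "y \<in> ng_vertices upper_tri2" "z \<in> ng_vertices upper_tri2"
      and "lie_bracket x y = 0" "lie_bracket y z = 0"
      by (simp_all add: commute_rel_def)
    moreover have "x \<in> upper_tri2" "y \<in> upper_tri2" "z \<in> upper_tri2"
      using V ng_vertices_subset by blast+
    moreover have "y$1$1 \<noteq> y$2$2 \<or> y$1$2 \<noteq> 0"
      using V(2) by (simp add: ng_vertices_upper_tri2)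
    ultimately show "(x, z) \<in> commute_rel (ng_vertices upper_tri2)"
      using bracket_coeff_trans by (simp add: commute_rel_def lie_bracket_eq_0_upper_tri2)
  qed
qed (auto simp: commute_rel_def)

lemma ng_adj_upper_tri2:
  "ng_adj upper_tri2 x y \<longleftrightarrow> x \<noteq> y \<and> (x, y) \<in> commute_rel (ng_vertices upper_tri2)"
  using lie_nilpotent_lie_gen_upper_tri2_iff[of x y] ng_vertices_subset[of upper_tri2]
  by (auto simp: ng_adj_def commute_rel_def)

lemma commute_class_upper_tri2:
  assumes x: "x \<in> ng_vertices upper_tri2"
  defines "p \<equiv> x$1$1 - x$2$2" and "s \<equiv> x$1$2"
  shows "commute_rel (ng_vertices upper_tri2) `` {x}
    = (\<lambda>(l, d). tri2 (l * p + d) (l * s) d) ` ((- {0}) \<times> UNIV)"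
proof (intro equalityI subsetI)
  have x_tri: "x \<in> upper_tri2" and ps: "p \<noteq> 0 \<or> s \<noteq> 0"
    using x by (simp_all add: ng_vertices_upper_tri2 p_def s_def)
  fix y
  show "y \<in> (\<lambda>(l, d). tri2 (l * p + d) (l * s) d) ` ((- {0}) \<times> UNIV)"
    if "y \<in> commute_rel (ng_vertices upper_tri2) `` {x}"
  proof -
    have y: "y \<in> upper_tri2" "y$1$1 \<noteq> y$2$2 \<or> y$1$2 \<noteq> 0" "p * y$1$2 = (y$1$1 - y$2$2) * s"
      using that x_tri by (auto simp: commute_rel_def ng_vertices_upper_tri2
          lie_bracket_eq_0_upper_tri2 bracket_coeff_def p_def s_def)
    obtain l where l: "y$1$1 - y$2$2 = l * p" "y$1$2 = l * s"
    proof (cases "p = 0")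
      case True
      then show ?thesis using that[of "y$1$2 / s"] y(3) ps by auto
    next
      case False
      then show ?thesis using that[of "(y$1$1 - y$2$2) / p"] y(3) by (auto simp: field_simps)
    qed
    then have "l \<noteq> 0"
      using y(2) by auto
    moreover have "y = tri2 (l * p + y$2$2) (l * s) (y$2$2)"
      using y(1) l by (simp add: mat2_eq_iff upper_tri2_def diff_eq_eq)
    ultimately show ?thesis
      by (intro image_eqI[where x = "(l, y$2$2)"]) simp_all
  qed
  show "y \<in> commute_rel (ng_vertices upper_tri2) `` {x}"
    if y_in: "y \<in> (\<lambda>(l, d). tri2 (l * p + d) (l * s) d) ` ((- {0}) \<times> UNIV)"
  proof -
    obtain l d where "l \<noteq> 0" and y: "y = tri2 (l * p + d) (l * s) d"
      using y_in by auto
    then have "y \<in> ng_vertices upper_tri2"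
      using ps by (simp add: ng_vertices_upper_tri2)
    moreover have "bracket_coeff x y = 0"
      unfolding y bracket_coeff_def p_def[symmetric] s_def[symmetric] by simp
    ultimately show ?thesis
      using x x_tri by (simp add: commute_rel_def lie_bracket_eq_0_upper_tri2 y)
  qed
qed

lemma card_commute_class_upper_tri2:
  fixes C :: "('a::{field,finite}^2^2) set"
  assumes "C \<in> ng_vertices upper_tri2 // commute_rel (ng_vertices upper_tri2)"
  shows "card C = CARD('a) * (CARD('a) - 1)"
  using assms
proof (rule quotientE)
  fix x assume C: "C = commute_rel (ng_vertices upper_tri2) `` {x}"
    and x: "x \<in> ng_vertices upper_tri2"
  let ?p = "x$1$1 - x$2$2" and ?s = "x$1$2"
  have ps: "?p \<noteq> 0 \<or> ?s \<noteq> 0"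
    using x by (simp add: ng_vertices_upper_tri2)
  have "inj_on (\<lambda>(l, d). tri2 (l * ?p + d) (l * ?s) d :: 'a^2^2) ((- {0}) \<times> UNIV)"
  proof (rule inj_onI)
    fix u v :: "'a \<times> 'a"
    obtain l d l' d' where uv: "u = (l, d)" "v = (l', d')"
      by fastforce
    assume "(\<lambda>(l, d). tri2 (l * ?p + d) (l * ?s) d) u = (\<lambda>(l, d). tri2 (l * ?p + d) (l * ?s) d) v"
    then have "l * ?p = l' * ?p" "l * ?s = l' * ?s" "d = d'"
      unfolding uv by auto
    then have "l = l'"
      using ps by auto
    then show "u = v"
      unfolding uv using \<open>d = d'\<close> by simp
  qed
  then show ?thesis
    by (simp add: C commute_class_upper_tri2[OF x] card_image card_cartesian_product
        Compl_eq_Diff_UNIV card_Diff_subset mult.commute)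
qed

lemma card_quotient_commute_rel_upper_tri2:
  "card (ng_vertices (upper_tri2 :: ('a::{field,finite}^2^2) set)
     // commute_rel (ng_vertices upper_tri2)) = CARD('a) + 1"
proof -
  let ?q = "CARD('a)" and ?V = "ng_vertices (upper_tri2 :: ('a^2^2) set)"
  have "?q * (?q - 1) * card (?V // commute_rel ?V) = card ?V"
    using equiv_commute_rel_upper_tri2 card_commute_class_upper_tri2
    by (intro card_quotient_uniform) simp_all
  also have "\<dots> = ?q * (?q - 1) * (?q + 1)"
    by (simp add: card_ng_vertices_upper_tri2 power3_eq_cube diff_mult_distrib diff_mult_distrib2
        algebra_simps)
  finally have "?q * (?q - 1) * card (?V // commute_rel ?V) = ?q * (?q - 1) * (?q + 1)" .
  moreover have "?q * (?q - 1) \<noteq> 0"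
    using card_mono[of "UNIV :: 'a set" "{0, 1}"] by simp
  ultimately show ?thesis
    by (rule mult_left_cancel[THEN iffD1, rotated])
qed

theorem theorem4p6:
  fixes q :: nat
  assumes "q = CARD('a::{field,finite})"
  defines "L \<equiv> (upper_tri2 :: ('a^2^2) set)"
  shows "card (conn_components (ng_vertices L) (ng_adj L)) = q + 1
    \<and> (\<forall>C \<in> conn_components (ng_vertices L) (ng_adj L).
          card C = q * (q - 1) \<and> is_clique C (ng_adj L))"
proof -
  let ?V = "ng_vertices L" and ?r = "commute_rel (ng_vertices L)"
  have equiv: "equiv ?V ?r"
    unfolding L_def by (rule equiv_commute_rel_upper_tri2)
  have adj: "ng_adj L x y \<longleftrightarrow> x \<noteq> y \<and> (x, y) \<in> ?r" for x y
    unfolding L_def by (rule ng_adj_upper_tri2)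
  have "conn_components ?V (ng_adj L) = ?V // ?r"
    using equiv adj by (rule conn_components_eq_quotient)
  moreover have "is_clique C (ng_adj L)" if "C \<in> ?V // ?r" for C
    using equiv adj that by (rule is_clique_quotient)
  ultimately show ?thesis
    unfolding assms(1) L_def
    using card_quotient_commute_rel_upper_tri2 card_commute_class_upper_tri2 by auto
qed

end
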